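(* Let $S$ and $T$ be trees. For each shuffle $A$ of $S$ and $T$, the edge labelling gives an injective map of posets $E(A)\hookrightarrow E(S)\times E(T)$ and hence an embedding $BA\hookrightarrow B(E(S)\times E(T))\cong BS\times BT$. Then $$BS\times BT=\bigcup_{A\in Sh(S,T)} BA,$$ i.e. the images of these embeddings jointly cover $BS\times BT$. Equivalently at the simplicial level, every chain $(s_0,t_0)\le\dots\le(s_n,t_n)$ in the product poset $E(S)\times E(T)$ is contained in $E(A)$ for some shuffle $A$.
   Context: A tree is a finite connected graph without cycles whose external edges are open. One external edge is the root; the others are leaves. Each vertex has one outgoing edge (towards the root) and a strictly positive number of incoming edges. No planar structure. $E(T)$ is the edge set partially ordered by $e\le e'$ iff $e$ lies on the path from $e'$ to the root. For a finite poset $P$, its classifying space $B(P)$ is the geometric realization of its nerve (the simplicial complex of chains of $P$); $BT:=B(E(T))$. Concretely, a point of $BT$ is a function $\lambda:E(T)\to[0,1]$ with $\sum_e\lambda(e)=1$ whose support lies in a single chain (branch), with the subspace topology from $[0,1]^{E(T)}$. There is a natural homeomorphism $B(P\times Q)\cong B(P)\times B(Q)$ for finite posets $P,Q$. Shuffle: for trees $S,T$ with root edges $r_S,r_T$, a shuffle is a tree $A$ with edges labelled by pairs $(s,t)\in E(S)\times E(T)$ such that: (1) the root of $A$ is labelled $(r_S,r_T)$; (2) the labelling restricts to a bijection from leaves of $A$ onto $\mathrm{Leaves}(S)\times\mathrm{Leaves}(T)$; (3) if an edge labelled $(s,t)$ is not a leaf, the incoming edges of the vertex of $A$ above it are labelled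 either exactly $(s_1,t),\dots,(s_m,t)$ for $s_1,\dots,s_m$ the edges immediately above $s$ in $S$, or exactly $(s,t_1),\dots,(s,t_n)$ for $t_1,\dots,t_n$ the edges immediately above $t$ in $T$. Shuffles are taken up to isomorphism of labelled trees; $Sh(S,T)$ is the set of shuffles. *)

theory Defs
  imports Main
begin

text \<open>A (non-planar, rooted) tree is encoded by its set of edges, its root edge and,
for every non-root edge c, the edge par c: the outgoing edge of the vertex at
the lower end of c.\<close>

record 'e ptree =
  edges :: "'e set"
  rootE :: 'e
  par   :: "'e \<Rightarrow> 'e"

definition up_rel :: "'e ptree \<Rightarrow> ('e \<times> 'e) set" where
  "up_rel T = {(par T c, c) | c. c \<in> edges T - {rootE T}}"

definition is_tree :: "'e ptree \<Rightarrow> bool" where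
  "is_tree T \<longleftrightarrow> finite (edges T) \<and> rootE T \<in> edges T
     \<and> (\<forall>c \<in> edges T - {rootE T}. par T c \<in> edges T)
     \<and> (\<forall>e \<in> edges T. (rootE T, e) \<in> (up_rel T)\<^sup>*)"

definition edge_le :: "'e ptree \<Rightarrow> 'e \<Rightarrow> 'e \<Rightarrow> bool" where
  "edge_le T e e' \<longleftrightarrow> e \<in> edges T \<and> e' \<in> edges T \<and> (e, e') \<in> (up_rel T)\<^sup>*"

definition children :: "'e ptree \<Rightarrow> 'e \<Rightarrow> 'e set" where
  "children T e = {c \<in> edges T - {rootE T}. par T c = e}"

definition leaves :: "'e ptree \<Rightarrow> 'e set" where
  "leaves T = {e \<in> edges T. children T e = {}}"

definition is_shuffle :: "'s ptree \<Rightarrow> 't ptree \<Rightarrow> 'a ptree \<Rightarrow> ('a \<Rightarrow> 's \<times> 't) \<Rightarrow> bool" where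
  "is_shuffle S T A l \<longleftrightarrow> is_tree A
     \<and> (\<forall>a \<in> edges A. l a \<in> edges S \<times> edges T)
     \<and> l (rootE A) = (rootE S, rootE T)
     \<and> bij_betw l (leaves A) (leaves S \<times> leaves T)
     \<and> (\<forall>a \<in> edges A - leaves A.
          bij_betw l (children A a) (children S (fst (l a)) \<times> {snd (l a)})
        \<or> bij_betw l (children A a) ({fst (l a)} \<times> children T (snd (l a))))"

end

theory Submission
  imports Defs
begin

(* The shuffle is grown from the root pair (rootE S, rootE T): at a pair (s, t) the coordinate s
   is replaced by its children if s is not a leaf and either t is a leaf or some element of C above
   (s, t) has second coordinate t but first coordinate different from s; otherwise t is replaced by
   its children. This choice never overshoots an element of C lying above the current pair, so every
   element of C is reached from every pair below it, and C lies on a single branch. Below any fixed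
   pair the growth is deterministic, so a reachable pair has exactly one reachable predecessor and
   the reachable pairs form a tree: a shuffle labelled by the identity. Renaming its edges by
   natural numbers gives the required shuffle. *)

section \<open>Rooted trees\<close>

lemma children_eq_up_rel: "children T e = {c. (e, c) \<in> up_rel T}"
  unfolding children_def up_rel_def by auto

lemma up_rel_iff: "(a, b) \<in> up_rel T \<longleftrightarrow> b \<in> edges T \<and> b \<noteq> rootE T \<and> a = par T b"
  unfolding up_rel_def by auto

lemma up_rel_eq_image: "up_rel T = (\<lambda>c. (par T c, c)) ` (edges T - {rootE T})"
  unfolding up_rel_def by auto

locale rooted_tree =
  fixes T :: "'e ptree"
  assumes is_tree: "is_tree T"
begin

lemma up_rel_edges: "(a, b) \<in> up_rel T \<Longrightarrow> a \<in> edges T \<and> b \<in> edges T"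
  using is_tree unfolding is_tree_def up_rel_iff by auto

lemma rtrancl_up_rel_edges_left: "(a, b) \<in> (up_rel T)\<^sup>* \<Longrightarrow> b \<in> edges T \<Longrightarrow> a \<in> edges T"
  by (induction rule: converse_rtrancl_induct) (auto dest: up_rel_edges)

lemma rtrancl_up_rel_edges_right: "(a, b) \<in> (up_rel T)\<^sup>* \<Longrightarrow> a \<in> edges T \<Longrightarrow> b \<in> edges T"
  by (induction rule: rtrancl_induct) (auto dest: up_rel_edges)

lemma edge_le_iff: "edge_le T a b \<longleftrightarrow> a \<in> edges T \<and> (a, b) \<in> (up_rel T)\<^sup>*"
  unfolding edge_le_def using rtrancl_up_rel_edges_right by blast

lemma up_rel_subset: "up_rel T \<subseteq> edges T \<times> edges T"
  using up_rel_edges by auto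

lemma finite_edges: "finite (edges T)"
  using is_tree unfolding is_tree_def by auto

lemma root_in_edges: "rootE T \<in> edges T"
  using is_tree unfolding is_tree_def by auto

lemma root_reaches: "e \<in> edges T \<Longrightarrow> (rootE T, e) \<in> (up_rel T)\<^sup>*"
  using is_tree unfolding is_tree_def by auto

lemma up_rel_acyclic: "e \<in> edges T \<Longrightarrow> (e, e) \<notin> (up_rel T)\<^sup>+"
proof -
  have "(e, e) \<notin> (up_rel T)\<^sup>+" if "(rootE T, e) \<in> (up_rel T)\<^sup>*" for e
    using that
  proof (induction rule: rtrancl_induct)
    case base
    show ?case
      by (metis tranclE up_rel_iff)
  next
    case (step w e)
    show ?case
    proof
      assume "(e, e) \<in> (up_rel T)\<^sup>+"
      then obtain v where "(e, v) \<in> (up_rel T)\<^sup>*" "(v, e) \<in> up_rel T"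
        by (meson tranclD2)
      moreover have "v = w"
        using \<open>(v, e) \<in> up_rel T\<close> step.hyps(2) by (simp add: up_rel_iff)
      ultimately have "(w, w) \<in> (up_rel T)\<^sup>+"
        using rtrancl_into_trancl2[OF step.hyps(2)] by simp
      with step.IH show False ..
    qed
  qed
  then show "e \<in> edges T \<Longrightarrow> (e, e) \<notin> (up_rel T)\<^sup>+"
    using root_reaches by blast
qed

definition ancestors :: "'e \<Rightarrow> 'e set" where
  "ancestors e = {a. (a, e) \<in> (up_rel T)\<^sup>*}"

definition depth :: "'e \<Rightarrow> nat" where
  "depth e = card (ancestors e)"

lemma finite_ancestors: "e \<in> edges T \<Longrightarrow> finite (ancestors e)"
  using finite_edges rtrancl_up_rel_edges_left unfolding ancestors_def
  by (metis (no_types, lifting) finite_subset mem_Collect_eq subsetI)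

lemma ancestors_up_rel: "(a, b) \<in> up_rel T \<Longrightarrow> ancestors b = insert b (ancestors a)"
  unfolding ancestors_def
  by (auto elim: rtranclE simp: up_rel_iff intro: rtrancl_into_rtrancl)

lemma depth_up_rel: assumes "(a, b) \<in> up_rel T" shows "depth b = Suc (depth a)"
proof -
  have "b \<notin> ancestors a"
  proof
    assume "b \<in> ancestors a"
    then have "(b, a) \<in> (up_rel T)\<^sup>*"
      by (simp add: ancestors_def)
    then have "(b, b) \<in> (up_rel T)\<^sup>+"
      using assms by (rule rtrancl_into_trancl1)
    then show False
      using up_rel_acyclic up_rel_edges[OF assms] by blast
  qed
  then show ?thesis
    unfolding depth_def ancestors_up_rel[OF assms]
    using finite_ancestors up_rel_edges[OF assms] by simp
qed

lemma depth_less: "(a, b) \<in> (up_rel T)\<^sup>+ \<Longrightarrow> depth a < depth b"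
  by (induction rule: trancl_induct) (auto simp: depth_up_rel)

lemma depth_mono: "(a, b) \<in> (up_rel T)\<^sup>* \<Longrightarrow> depth a \<le> depth b"
  by (metis depth_less less_imp_le_nat order_refl rtranclD)

lemma depth_strict_mono: "(a, b) \<in> (up_rel T)\<^sup>* \<Longrightarrow> a \<noteq> b \<Longrightarrow> depth a < depth b"
  by (metis depth_less rtranclD)

lemma up_rel_antisym: "(a, b) \<in> (up_rel T)\<^sup>* \<Longrightarrow> (b, a) \<in> (up_rel T)\<^sup>* \<Longrightarrow> a = b"
  using depth_mono depth_strict_mono by fastforce

lemma below_comparable:
  "(a, e) \<in> (up_rel T)\<^sup>* \<Longrightarrow> (b, e) \<in> (up_rel T)\<^sup>* \<Longrightarrow> (a, b) \<in> (up_rel T)\<^sup>* \<or> (b, a) \<in> (up_rel T)\<^sup>*"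
proof (induction arbitrary: b rule: rtrancl_induct)
  case base
  then show ?case by simp
next
  case (step w e)
  note IH = step.IH
  from step.prems show ?case
  proof (cases rule: rtranclE)
    case base
    then show ?thesis
      using step.hyps by (meson rtrancl.rtrancl_into_rtrancl)
  next
    case (step v)
    then have "v = w"
      using \<open>(w, e) \<in> up_rel T\<close> by (simp add: up_rel_iff)
    then show ?thesis
      using IH step(1) by blast
  qed
qed

lemma child_below_unique:
  "(s, c1) \<in> up_rel T \<Longrightarrow> (s, c2) \<in> up_rel T \<Longrightarrow> (c1, e) \<in> (up_rel T)\<^sup>* \<Longrightarrow> (c2, e) \<in> (up_rel T)\<^sup>*
   \<Longrightarrow> c1 = c2"
  by (metis below_comparable depth_strict_mono depth_up_rel less_irrefl)

lemma child_toward: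
  "(s, e) \<in> (up_rel T)\<^sup>* \<Longrightarrow> s \<noteq> e \<Longrightarrow> \<exists>c. (s, c) \<in> up_rel T \<and> (c, e) \<in> (up_rel T)\<^sup>*"
  by (meson converse_rtranclE)

lemma leaf_above_eq: "children T s = {} \<Longrightarrow> (s, e) \<in> (up_rel T)\<^sup>* \<Longrightarrow> e = s"
  using child_toward children_eq_up_rel by fastforce

end

section \<open>Relabelling the edges of a tree\<close>

definition rename_ptree :: "('a \<Rightarrow> 'b) \<Rightarrow> 'a ptree \<Rightarrow> 'b ptree" where
  "rename_ptree f A = \<lparr>edges = f ` edges A, rootE = f (rootE A), par = f \<circ> par A \<circ> inv_into (edges A) f\<rparr>"

lemma rtrancl_map_prod_inj_on:
  assumes inj: "inj_on f E" and R: "R \<subseteq> E \<times> E" and a: "a \<in> E" and b: "b \<in> E"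
  shows "(f a, f b) \<in> (map_prod f f ` R)\<^sup>* \<longleftrightarrow> (a, b) \<in> R\<^sup>*"
proof
  assume "(a, b) \<in> R\<^sup>*"
  then show "(f a, f b) \<in> (map_prod f f ` R)\<^sup>*"
  proof (induction rule: rtrancl_induct)
    case (step w b)
    from step.hyps(2) have "(f w, f b) \<in> map_prod f f ` R"
      by (rule rev_image_eqI) simp
    with step.IH show ?case
      by (rule rtrancl.rtrancl_into_rtrancl)
  qed simp
next
  have "\<exists>b' \<in> E. v = f b' \<and> (a, b') \<in> R\<^sup>*" if "(f a, v) \<in> (map_prod f f ` R)\<^sup>*" for v
    using that
  proof (induction rule: rtrancl_induct)
    case base
    show ?case using a by blast
  next
    case (step w v)
    obtain p q where pq: "(p, q) \<in> R" "w = f p" "v = f q"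
      using step.hyps(2) by auto
    have "p \<in> E" "q \<in> E"
      using pq(1) R by auto
    obtain b' where b': "b' \<in> E" "w = f b'" "(a, b') \<in> R\<^sup>*"
      using step.IH by blast
    have "b' = p"
      using inj_onD[OF inj _ b'(1) \<open>p \<in> E\<close>] b'(2) pq(2) by simp
    with b'(3) pq(1) have "(a, q) \<in> R\<^sup>*"
      by simp
    with \<open>q \<in> E\<close> pq(3) show ?case
      by blast
  qed
  moreover assume "(f a, f b) \<in> (map_prod f f ` R)\<^sup>*"
  ultimately obtain b' where "b' \<in> E" "f b = f b'" "(a, b') \<in> R\<^sup>*"
    by blast
  then show "(a, b) \<in> R\<^sup>*"
    using inj_onD[OF inj _ b] by simp
qed

lemma bij_betw_comp_inv_into:
  "inj_on f E \<Longrightarrow> X \<subseteq> E \<Longrightarrow> bij_betw l X Y \<Longrightarrow> bij_betw (l \<circ> inv_into E f) (f ` X) Y"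
  by (metis bij_betw_inv_into_subset bij_betw_trans inj_on_imp_bij_betw)

context rooted_tree
begin

context
  fixes f :: "'e \<Rightarrow> 'b"
  assumes inj: "inj_on f (edges T)"
begin

lemma par_rename_ptree: "x \<in> edges T \<Longrightarrow> par (rename_ptree f T) (f x) = f (par T x)"
  unfolding rename_ptree_def using inj by simp

lemma up_rel_rename_ptree: "up_rel (rename_ptree f T) = map_prod f f ` up_rel T"
proof -
  have "edges (rename_ptree f T) - {rootE (rename_ptree f T)} = f ` (edges T - {rootE T})"
    using inj root_in_edges by (simp add: rename_ptree_def inj_on_image_set_diff)
  then have "up_rel (rename_ptree f T)
      = (\<lambda>c. (par (rename_ptree f T) c, c)) ` f ` (edges T - {rootE T})"
    by (simp add: up_rel_eq_image)
  also have "\<dots> = (\<lambda>c. (f (par T c), f c)) ` (edges T - {rootE T})"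
    unfolding image_image by (rule image_cong) (simp_all add: par_rename_ptree)
  also have "\<dots> = map_prod f f ` up_rel T"
    by (simp add: up_rel_eq_image image_image)
  finally show ?thesis .
qed

lemma edge_le_rename_ptree:
  assumes "a \<in> edges T" "b \<in> edges T"
  shows "edge_le (rename_ptree f T) (f a) (f b) \<longleftrightarrow> edge_le T a b"
proof -
  have "(f a, f b) \<in> (up_rel (rename_ptree f T))\<^sup>* \<longleftrightarrow> (a, b) \<in> (up_rel T)\<^sup>*"
    unfolding up_rel_rename_ptree using inj up_rel_subset assms by (rule rtrancl_map_prod_inj_on)
  with assms show ?thesis
    unfolding edge_le_def by (simp add: rename_ptree_def)
qed

lemma children_rename_ptree:
  assumes a: "a \<in> edges T"
  shows "children (rename_ptree f T) (f a) = f ` children T a"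
proof (intro set_eqI iffI)
  fix c assume "c \<in> children (rename_ptree f T) (f a)"
  then obtain x y where xy: "(x, y) \<in> up_rel T" "f a = f x" "c = f y"
    unfolding children_eq_up_rel up_rel_rename_ptree by auto
  have "x = a"
    using inj_onD[OF inj xy(2)[symmetric] _ a] up_rel_edges[OF xy(1)] by simp
  with xy show "c \<in> f ` children T a"
    unfolding children_eq_up_rel by simp
next
  fix c assume "c \<in> f ` children T a"
  then show "c \<in> children (rename_ptree f T) (f a)"
    unfolding children_eq_up_rel up_rel_rename_ptree by auto
qed

lemma leaves_rename_ptree: "leaves (rename_ptree f T) = f ` leaves T"
proof -
  have "f ` leaves T = {e \<in> f ` edges T. children (rename_ptree f T) e = {}}"
    unfolding leaves_def by (auto simp: children_rename_ptree)
  then show ?thesis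
    unfolding leaves_def by (simp add: rename_ptree_def)
qed

lemma is_tree_rename_ptree: "is_tree (rename_ptree f T)"
  unfolding is_tree_def
proof (intro conjI ballI)
  show "finite (edges (rename_ptree f T))" "rootE (rename_ptree f T) \<in> edges (rename_ptree f T)"
    using finite_edges root_in_edges by (simp_all add: rename_ptree_def)
next
  fix c assume "c \<in> edges (rename_ptree f T) - {rootE (rename_ptree f T)}"
  then obtain x where "x \<in> edges T" "x \<noteq> rootE T" "c = f x"
    by (auto simp: rename_ptree_def)
  then show "par (rename_ptree f T) c \<in> edges (rename_ptree f T)"
    using is_tree par_rename_ptree unfolding is_tree_def by (simp add: rename_ptree_def)
next
  fix e assume "e \<in> edges (rename_ptree f T)"
  then obtain x where "x \<in> edges T" "e = f x"
    by (auto simp: rename_ptree_def)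
  then show "(rootE (rename_ptree f T), e) \<in> (up_rel (rename_ptree f T))\<^sup>*"
    using edge_le_rename_ptree[OF root_in_edges] root_reaches root_in_edges
    unfolding edge_le_def by (simp add: rename_ptree_def)
qed

end

end

lemma is_shuffle_rename_ptree:
  assumes sh: "is_shuffle S T A l" and inj: "inj_on f (edges A)"
  shows "is_shuffle S T (rename_ptree f A) (l \<circ> inv_into (edges A) f)"
proof -
  interpret A: rooted_tree A
    using sh unfolding is_shuffle_def by unfold_locales blast
  let ?l = "l \<circ> inv_into (edges A) f"
  have label: "?l (f x) = l x" if "x \<in> edges A" for x
    using inj that by simp
  show ?thesis
    unfolding is_shuffle_def
  proof (intro conjI ballI)
    show "is_tree (rename_ptree f A)"
      using inj by (rule A.is_tree_rename_ptree)
    show "?l a \<in> edges S \<times> edges T" if "a \<in> edges (rename_ptree f A)" for a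
      using that label sh unfolding is_shuffle_def by (auto simp: rename_ptree_def)
    show "?l (rootE (rename_ptree f A)) = (rootE S, rootE T)"
      using label A.root_in_edges sh unfolding is_shuffle_def by (simp add: rename_ptree_def)
    show "bij_betw ?l (leaves (rename_ptree f A)) (leaves S \<times> leaves T)"
      unfolding A.leaves_rename_ptree[OF inj] using sh unfolding is_shuffle_def
      by (intro bij_betw_comp_inv_into[OF inj]) (auto simp: leaves_def)
  next
    fix a assume "a \<in> edges (rename_ptree f A) - leaves (rename_ptree f A)"
    then obtain x where x: "x \<in> edges A" "x \<notin> leaves A" "a = f x"
      using A.leaves_rename_ptree[OF inj] by (auto simp: rename_ptree_def)
    have "children A x \<subseteq> edges A"
      unfolding children_def by blast
    moreover have "bij_betw l (children A x) (children S (fst (l x)) \<times> {snd (l x)})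
        \<or> bij_betw l (children A x) ({fst (l x)} \<times> children T (snd (l x)))"
      using sh x unfolding is_shuffle_def by blast
    ultimately show "bij_betw ?l (children (rename_ptree f A) a) (children S (fst (?l a)) \<times> {snd (?l a)})
      \<or> bij_betw ?l (children (rename_ptree f A) a) ({fst (?l a)} \<times> children T (snd (?l a)))"
      unfolding x(3) label[OF x(1)] A.children_rename_ptree[OF inj x(1)]
      using bij_betw_comp_inv_into[OF inj] by blast
  qed
qed

section \<open>Growing a shuffle from the root pair\<close>

locale tree_pair = S: rooted_tree S + T: rooted_tree T
  for S :: "'s ptree" and T :: "'t ptree"
begin

definition prod_le :: "'s \<times> 't \<Rightarrow> 's \<times> 't \<Rightarrow> bool" where
  "prod_le x y \<longleftrightarrow> edge_le S (fst x) (fst y) \<and> edge_le T (snd x) (snd y)"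

definition rank :: "'s \<times> 't \<Rightarrow> nat" where
  "rank x = S.depth (fst x) + T.depth (snd x)"

lemma prod_le_iff:
  "prod_le x y \<longleftrightarrow> fst x \<in> edges S \<and> snd x \<in> edges T
     \<and> (fst x, fst y) \<in> (up_rel S)\<^sup>* \<and> (snd x, snd y) \<in> (up_rel T)\<^sup>*"
  unfolding prod_le_def S.edge_le_iff T.edge_le_iff by blast

lemma prod_le_refl: "fst x \<in> edges S \<Longrightarrow> snd x \<in> edges T \<Longrightarrow> prod_le x x"
  unfolding prod_le_iff by simp

lemma prod_le_trans: "prod_le x y \<Longrightarrow> prod_le y z \<Longrightarrow> prod_le x z"
  unfolding prod_le_iff by (meson rtrancl_trans)

lemma prod_le_edges_right: "prod_le x y \<Longrightarrow> fst y \<in> edges S \<and> snd y \<in> edges T"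
  unfolding prod_le_def edge_le_def by simp

lemma rank_mono: "prod_le x y \<Longrightarrow> rank x \<le> rank y"
  unfolding prod_le_iff rank_def using S.depth_mono T.depth_mono by (simp add: add_mono)

end

locale greedy_shuffle = tree_pair S T for S :: "'s ptree" and T :: "'t ptree" +
  fixes prefer_S :: "'s \<times> 't \<Rightarrow> bool"
begin

definition grows_S :: "'s \<times> 't \<Rightarrow> bool" where
  "grows_S x \<longleftrightarrow> children S (fst x) \<noteq> {} \<and> (prefer_S x \<or> children T (snd x) = {})"

definition grow :: "(('s \<times> 't) \<times> ('s \<times> 't)) set" where
  "grow = {(x, y). fst x \<in> edges S \<and> snd x \<in> edges T \<and>
     (if grows_S x then (fst x, fst y) \<in> up_rel S \<and> snd y = snd x
      else (snd x, snd y) \<in> up_rel T \<and> fst y = fst x)}"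

definition root_pair :: "'s \<times> 't" where
  "root_pair = (rootE S, rootE T)"

definition grown :: "('s \<times> 't) set" where
  "grown = {y. (root_pair, y) \<in> grow\<^sup>*}"

definition grown_par :: "'s \<times> 't \<Rightarrow> 's \<times> 't" where
  "grown_par y = (SOME x. x \<in> grown \<and> (x, y) \<in> grow)"

definition greedy_tree :: "('s \<times> 't) ptree" where
  "greedy_tree = \<lparr>edges = grown, rootE = root_pair, par = grown_par\<rparr>"

lemma edges_greedy_tree [simp]: "edges greedy_tree = grown"
  and rootE_greedy_tree [simp]: "rootE greedy_tree = root_pair"
  and par_greedy_tree [simp]: "par greedy_tree = grown_par"
  by (simp_all add: greedy_tree_def)

lemma grow_edges: "(x, y) \<in> grow \<Longrightarrow> fst x \<in> edges S \<and> snd x \<in> edges T \<and> fst y \<in> edges S \<and> snd y \<in> edges T"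
  unfolding grow_def by (cases "grows_S x") (auto dest: S.up_rel_edges T.up_rel_edges)

lemma grow_prod_le: "(x, y) \<in> grow \<Longrightarrow> prod_le x y"
  unfolding prod_le_iff grow_def by (cases "grows_S x") auto

lemma rank_grow: "(x, y) \<in> grow \<Longrightarrow> rank y = Suc (rank x)"
  unfolding rank_def grow_def by (cases "grows_S x") (auto simp: S.depth_up_rel T.depth_up_rel)

lemma rtrancl_grow_prod_le: "(x, y) \<in> grow\<^sup>* \<Longrightarrow> fst x \<in> edges S \<Longrightarrow> snd x \<in> edges T \<Longrightarrow> prod_le x y"
  by (induction rule: rtrancl_induct) (auto intro: prod_le_refl prod_le_trans grow_prod_le)

lemma rtrancl_grow_rank: "(x, y) \<in> grow\<^sup>* \<Longrightarrow> rank x \<le> rank y"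
  by (induction rule: rtrancl_induct) (auto dest: rank_grow)

lemma trancl_grow_rank: "(x, y) \<in> grow\<^sup>+ \<Longrightarrow> rank x < rank y"
  by (induction rule: trancl_induct) (auto dest: rank_grow)

lemma grow_deterministic_below:
  assumes "(z, w1) \<in> grow" "(z, w2) \<in> grow" "prod_le w1 c" "prod_le w2 c"
  shows "w1 = w2"
proof (cases "grows_S z")
  case True
  then have w: "(fst z, fst w1) \<in> up_rel S" "(fst z, fst w2) \<in> up_rel S" "snd w1 = snd z" "snd w2 = snd z"
    using assms(1,2) unfolding grow_def by auto
  have "fst w1 = fst w2"
    using S.child_below_unique[OF w(1,2)] assms(3,4) unfolding prod_le_iff by auto
  with w show ?thesis by (simp add: prod_eq_iff)
next
  case False
  then have w: "(snd z, snd w1) \<in> up_rel T" "(snd z, snd w2) \<in> up_rel T" "fst w1 = fst z" "fst w2 = fst z"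
    using assms(1,2) unfolding grow_def by auto
  have "snd w1 = snd w2"
    using T.child_below_unique[OF w(1,2)] assms(3,4) unfolding prod_le_iff by auto
  with w show ?thesis by (simp add: prod_eq_iff)
qed

lemma rtrancl_grow_below_comparable:
  "(z, a) \<in> grow\<^sup>* \<Longrightarrow> prod_le a c \<Longrightarrow> (z, b) \<in> grow\<^sup>* \<Longrightarrow> prod_le b c \<Longrightarrow>
   (a, b) \<in> grow\<^sup>* \<or> (b, a) \<in> grow\<^sup>*"
proof (induction rule: rtrancl_induct)
  case base
  then show ?case by simp
next
  case (step w a)
  have "prod_le w c"
    using grow_prod_le[OF step.hyps(2)] step.prems(1) prod_le_trans by blast
  then have "(w, b) \<in> grow\<^sup>* \<or> (b, w) \<in> grow\<^sup>*"
    using step by blast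
  then show ?case
  proof
    assume "(b, w) \<in> grow\<^sup>*"
    then show ?thesis
      using step.hyps(2) by (meson rtrancl.rtrancl_into_rtrancl)
  next
    assume "(w, b) \<in> grow\<^sup>*"
    then show ?thesis
    proof (cases rule: converse_rtranclE)
      case base
      then show ?thesis using step.hyps(2) by auto
    next
      case (step w')
      have "prod_le w' c"
        using rtrancl_grow_prod_le[OF step(2)] grow_edges[OF step(1)] \<open>prod_le b c\<close> prod_le_trans
        by blast
      then have "w' = a"
        using grow_deterministic_below[OF step(1) \<open>(w, a) \<in> grow\<close>] \<open>prod_le a c\<close> by blast
      then show ?thesis using step by simp
    qed
  qed
qed

lemma root_pair_edges: "fst root_pair \<in> edges S" "snd root_pair \<in> edges T"
  unfolding root_pair_def using S.root_in_edges T.root_in_edges by auto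

lemma root_pair_grown: "root_pair \<in> grown"
  unfolding grown_def by simp

lemma grown_prod_le: "y \<in> grown \<Longrightarrow> prod_le root_pair y"
  unfolding grown_def using rtrancl_grow_prod_le root_pair_edges by blast

lemma grown_edges: "y \<in> grown \<Longrightarrow> fst y \<in> edges S \<and> snd y \<in> edges T"
  using grown_prod_le prod_le_edges_right by blast

lemma grown_closed: "x \<in> grown \<Longrightarrow> (x, y) \<in> grow\<^sup>* \<Longrightarrow> y \<in> grown"
  unfolding grown_def by (auto intro: rtrancl_trans)

lemma finite_grown: "finite grown"
proof (rule finite_subset)
  show "grown \<subseteq> edges S \<times> edges T"
    using grown_edges by (simp add: subset_iff mem_Times_iff)
  show "finite (edges S \<times> edges T)"
    using S.finite_edges T.finite_edges by simp
qed

lemma grown_pred_unique: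
  assumes "x1 \<in> grown" "x2 \<in> grown" "(x1, y) \<in> grow" "(x2, y) \<in> grow"
  shows "x1 = x2"
proof (rule ccontr)
  assume "x1 \<noteq> x2"
  have "(x1, x2) \<in> grow\<^sup>* \<or> (x2, x1) \<in> grow\<^sup>*"
    using rtrancl_grow_below_comparable[of root_pair x1 y x2] assms grow_prod_le unfolding grown_def by blast
  then have "rank x1 < rank x2 \<or> rank x2 < rank x1"
    using \<open>x1 \<noteq> x2\<close> trancl_grow_rank by (metis rtranclD)
  then show False
    using rank_grow[OF assms(3)] rank_grow[OF assms(4)] by auto
qed

lemma grown_par_grow:
  assumes "y \<in> grown" "y \<noteq> root_pair"
  shows "grown_par y \<in> grown \<and> (grown_par y, y) \<in> grow"
proof -
  obtain x where "(root_pair, x) \<in> grow\<^sup>*" "(x, y) \<in> grow"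
    using assms by (metis grown_def mem_Collect_eq rtranclE)
  then have "\<exists>x. x \<in> grown \<and> (x, y) \<in> grow"
    unfolding grown_def by blast
  then show ?thesis
    unfolding grown_par_def by (rule someI_ex)
qed

lemma grow_from_grown:
  assumes "x \<in> grown" "(x, y) \<in> grow"
  shows "y \<in> grown" "y \<noteq> root_pair" "grown_par y = x"
proof -
  show y: "y \<in> grown"
    using grown_closed assms by blast
  have "rank root_pair \<le> rank x"
    using assms(1) rtrancl_grow_rank unfolding grown_def by blast
  then show y_root: "y \<noteq> root_pair"
    using rank_grow[OF assms(2)] by auto
  show "grown_par y = x"
    using grown_par_grow[OF y y_root] grown_pred_unique assms by blast
qed

lemma up_rel_greedy_tree: "(a, b) \<in> up_rel greedy_tree \<longleftrightarrow> a \<in> grown \<and> (a, b) \<in> grow"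
proof
  assume "(a, b) \<in> up_rel greedy_tree"
  then have "b \<in> grown" "b \<noteq> root_pair" "a = grown_par b"
    by (simp_all add: up_rel_iff)
  then show "a \<in> grown \<and> (a, b) \<in> grow"
    using grown_par_grow by blast
next
  assume "a \<in> grown \<and> (a, b) \<in> grow"
  then have "b \<in> grown" "b \<noteq> root_pair" "a = grown_par b"
    using grow_from_grown[of a b] by auto
  then show "(a, b) \<in> up_rel greedy_tree"
    by (simp add: up_rel_iff)
qed

lemma edge_le_greedy_tree: "a \<in> grown \<Longrightarrow> (a, b) \<in> grow\<^sup>* \<Longrightarrow> edge_le greedy_tree a b"
proof -
  assume a: "a \<in> grown" and ab: "(a, b) \<in> grow\<^sup>*"
  from ab have "(a, b) \<in> (up_rel greedy_tree)\<^sup>*"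
  proof (induction rule: rtrancl_induct)
    case (step w b)
    have "w \<in> grown"
      using grown_closed[OF a step.hyps(1)] .
    then have "(w, b) \<in> up_rel greedy_tree"
      using step.hyps(2) up_rel_greedy_tree by blast
    with step.IH show ?case
      by (meson rtrancl.rtrancl_into_rtrancl)
  qed simp
  moreover have "b \<in> grown"
    using grown_closed a ab by blast
  ultimately show ?thesis
    using a unfolding edge_le_def by simp
qed

lemma is_tree_greedy_tree: "is_tree greedy_tree"
  unfolding is_tree_def
proof (intro conjI ballI)
  show "finite (edges greedy_tree)" "rootE greedy_tree \<in> edges greedy_tree"
    using finite_grown root_pair_grown by simp_all
next
  fix c assume "c \<in> edges greedy_tree - {rootE greedy_tree}"
  then show "par greedy_tree c \<in> edges greedy_tree"
    using grown_par_grow by simp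
next
  fix e assume "e \<in> edges greedy_tree"
  then show "(rootE greedy_tree, e) \<in> (up_rel greedy_tree)\<^sup>*"
    using edge_le_greedy_tree root_pair_grown
    unfolding edge_le_def by (simp add: grown_def)
qed

lemma children_greedy_tree:
  assumes "a \<in> grown"
  shows "children greedy_tree a =
    (if grows_S a then children S (fst a) \<times> {snd a} else {fst a} \<times> children T (snd a))"
  using assms grown_edges[OF assms]
  unfolding children_eq_up_rel up_rel_greedy_tree grow_def by (auto simp: mem_Times_iff)

lemma leaf_greedy_tree_iff:
  "a \<in> grown \<Longrightarrow> children greedy_tree a = {} \<longleftrightarrow> children S (fst a) = {} \<and> children T (snd a) = {}"
  unfolding children_greedy_tree grows_S_def by auto

lemma grow_toward:
  assumes "prod_le x y"
    and "grows_S x \<Longrightarrow> fst x \<noteq> fst y" and "\<not> grows_S x \<Longrightarrow> snd x \<noteq> snd y"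
  shows "\<exists>x'. (x, x') \<in> grow \<and> prod_le x' y"
proof -
  have x: "fst x \<in> edges S" "snd x \<in> edges T"
    and below: "(fst x, fst y) \<in> (up_rel S)\<^sup>*" "(snd x, snd y) \<in> (up_rel T)\<^sup>*"
    using assms(1) unfolding prod_le_iff by auto
  show ?thesis
  proof (cases "grows_S x")
    case True
    then obtain c where c: "(fst x, c) \<in> up_rel S" "(c, fst y) \<in> (up_rel S)\<^sup>*"
      using S.child_toward below(1) assms(2) by blast
    then have "(x, (c, snd x)) \<in> grow" "prod_le (c, snd x) y"
      using True x below S.up_rel_edges unfolding grow_def prod_le_iff by auto
    then show ?thesis by blast
  next
    case False
    then obtain c where c: "(snd x, c) \<in> up_rel T" "(c, snd y) \<in> (up_rel T)\<^sup>*"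
      using T.child_toward below(2) assms(3) by blast
    then have "(x, (fst x, c)) \<in> grow" "prod_le (fst x, c) y"
      using False x below T.up_rel_edges unfolding grow_def prod_le_iff by auto
    then show ?thesis by blast
  qed
qed

lemma rtrancl_grow_if_guided:
  assumes guide: "\<And>x. prod_le x y \<Longrightarrow> x \<noteq> y \<Longrightarrow> \<exists>x'. (x, x') \<in> grow \<and> prod_le x' y"
  shows "prod_le x y \<Longrightarrow> (x, y) \<in> grow\<^sup>*"
proof (induction x rule: measure_induct_rule[of "\<lambda>x. rank y - rank x"])
  case (less x)
  show ?case
  proof (cases "x = y")
    case False
    then obtain x' where x': "(x, x') \<in> grow" "prod_le x' y"
      using guide less.prems by blast
    then have "rank y - rank x' < rank y - rank x"
      using rank_grow rank_mono by fastforce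
    then have "(x', y) \<in> grow\<^sup>*"
      using less.IH x'(2) by blast
    with x'(1) show ?thesis
      by (rule converse_rtrancl_into_rtrancl)
  qed simp
qed

lemma rtrancl_grow_leaf:
  assumes y: "y \<in> leaves S \<times> leaves T"
  shows "prod_le x y \<Longrightarrow> (x, y) \<in> grow\<^sup>*"
proof (rule rtrancl_grow_if_guided[OF grow_toward])
  fix x assume x: "prod_le x y" "x \<noteq> y"
  have leaf: "children S (fst y) = {}" "children T (snd y) = {}"
    using y unfolding leaves_def by auto
  show "grows_S x \<Longrightarrow> fst x \<noteq> fst y"
    using leaf(1) unfolding grows_S_def by auto
  show "snd x \<noteq> snd y" if "\<not> grows_S x"
  proof
    assume "snd x = snd y"
    then have "children S (fst x) = {}"
      using that leaf(2) unfolding grows_S_def by auto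
    then have "fst y = fst x"
      using S.leaf_above_eq x(1) unfolding prod_le_iff by blast
    with \<open>snd x = snd y\<close> x(2) show False
      by (simp add: prod_eq_iff)
  qed
qed

lemma leaves_greedy_tree: "leaves greedy_tree = leaves S \<times> leaves T"
proof (intro set_eqI iffI)
  fix a assume "a \<in> leaves greedy_tree"
  then have "a \<in> grown" "children greedy_tree a = {}"
    unfolding leaves_def by auto
  then show "a \<in> leaves S \<times> leaves T"
    using leaf_greedy_tree_iff grown_edges unfolding leaves_def by (auto simp: mem_Times_iff)
next
  fix y assume y: "y \<in> leaves S \<times> leaves T"
  have "prod_le root_pair y"
    using y S.root_reaches T.root_reaches unfolding prod_le_iff root_pair_def leaves_def
    by (auto simp: S.root_in_edges T.root_in_edges)
  then have "y \<in> grown"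
    unfolding grown_def using rtrancl_grow_leaf[OF y] by blast
  with y show "y \<in> leaves greedy_tree"
    using leaf_greedy_tree_iff unfolding leaves_def by auto
qed

lemma is_shuffle_greedy_tree: "is_shuffle S T greedy_tree id"
  unfolding is_shuffle_def
proof (intro conjI ballI)
  show "is_tree greedy_tree"
    by (rule is_tree_greedy_tree)
  show "id a \<in> edges S \<times> edges T" if "a \<in> edges greedy_tree" for a
    using that grown_edges by (auto simp: mem_Times_iff)
  show "id (rootE greedy_tree) = (rootE S, rootE T)"
    by (simp add: root_pair_def)
  show "bij_betw id (leaves greedy_tree) (leaves S \<times> leaves T)"
    by (simp add: leaves_greedy_tree)
next
  fix a assume "a \<in> edges greedy_tree - leaves greedy_tree"
  then have "a \<in> grown"
    by simp
  then show "bij_betw id (children greedy_tree a) (children S (fst (id a)) \<times> {snd (id a)})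
    \<or> bij_betw id (children greedy_tree a) ({fst (id a)} \<times> children T (snd (id a)))"
    by (simp add: children_greedy_tree)
qed

end

section \<open>A shuffle containing a given chain\<close>

definition needs_S_growth :: "'s ptree \<Rightarrow> 't ptree \<Rightarrow> ('s \<times> 't) set \<Rightarrow> 's \<times> 't \<Rightarrow> bool" where
  "needs_S_growth S T C x \<longleftrightarrow> (\<exists>c \<in> C. edge_le S (fst x) (fst c) \<and> fst c \<noteq> fst x \<and> snd c = snd x)"

locale chain_shuffle = greedy_shuffle S T "needs_S_growth S T C"
  for S :: "'s ptree" and T :: "'t ptree" and C :: "('s \<times> 't) set" +
  assumes chain_edges: "C \<subseteq> edges S \<times> edges T"
    and chain: "\<forall>x \<in> C. \<forall>y \<in> C.
           (edge_le S (fst x) (fst y) \<and> edge_le T (snd x) (snd y))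
         \<or> (edge_le S (fst y) (fst x) \<and> edge_le T (snd y) (snd x))"
begin

lemma chain_comparable: "x \<in> C \<Longrightarrow> y \<in> C \<Longrightarrow> prod_le x y \<or> prod_le y x"
  using chain unfolding prod_le_def by blast

lemma grows_S_fst_ne_chain:
  assumes c: "c \<in> C" and x: "prod_le x c" "x \<noteq> c" and "grows_S x"
  shows "fst x \<noteq> fst c"
proof -
  have below: "(fst x, fst c) \<in> (up_rel S)\<^sup>*" "(snd x, snd c) \<in> (up_rel T)\<^sup>*"
    using x(1) unfolding prod_le_iff by auto
  have fst_ne_if_snd_eq: "fst x \<noteq> fst c" if "snd x = snd c"
    using x(2) that by (auto simp: prod_eq_iff)
  show ?thesis
  proof (cases "needs_S_growth S T C x")
    case True
    then obtain c0 where c0: "c0 \<in> C" "(fst x, fst c0) \<in> (up_rel S)\<^sup>*" "fst c0 \<noteq> fst x"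
      "snd c0 = snd x"
      unfolding needs_S_growth_def S.edge_le_iff by blast
    from chain_comparable[OF c0(1) c] show ?thesis
    proof
      assume "prod_le c0 c"
      then have "(fst c0, fst c) \<in> (up_rel S)\<^sup>*"
        unfolding prod_le_iff by simp
      show ?thesis
      proof
        assume "fst x = fst c"
        with \<open>(fst c0, fst c) \<in> (up_rel S)\<^sup>*\<close> c0(2,3) show False
          using S.up_rel_antisym by simp
      qed
    next
      assume "prod_le c c0"
      then have "(snd c, snd x) \<in> (up_rel T)\<^sup>*"
        using c0(4) unfolding prod_le_iff by simp
      then have "snd x = snd c"
        using below(2) by (rule T.up_rel_antisym[symmetric])
      then show ?thesis
        by (rule fst_ne_if_snd_eq)
    qed
  next
    case False
    with \<open>grows_S x\<close> have "children T (snd x) = {}"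
      unfolding grows_S_def by simp
    then have "snd c = snd x"
      using below(2) by (rule T.leaf_above_eq)
    then show ?thesis
      using fst_ne_if_snd_eq by simp
  qed
qed

lemma not_grows_S_snd_ne_chain:
  assumes c: "c \<in> C" and x: "prod_le x c" "x \<noteq> c" and "\<not> grows_S x"
  shows "snd x \<noteq> snd c"
proof
  assume "snd x = snd c"
  with x(2) have "fst x \<noteq> fst c"
    by (auto simp: prod_eq_iff)
  then obtain s where "(fst x, s) \<in> up_rel S"
    using S.child_toward x(1) unfolding prod_le_iff by blast
  then have "children S (fst x) \<noteq> {}"
    unfolding children_eq_up_rel by blast
  moreover have "needs_S_growth S T C x"
    unfolding needs_S_growth_def
    using c x(1) \<open>fst x \<noteq> fst c\<close> \<open>snd x = snd c\<close> unfolding prod_le_def by auto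
  ultimately show False
    using \<open>\<not> grows_S x\<close> unfolding grows_S_def by simp
qed

lemma grow_toward_chain:
  assumes "c \<in> C" "prod_le x c" "x \<noteq> c"
  shows "\<exists>x'. (x, x') \<in> grow \<and> prod_le x' c"
  using assms(2) grows_S_fst_ne_chain[OF assms] not_grows_S_snd_ne_chain[OF assms]
  by (rule grow_toward)

lemma rtrancl_grow_chain: "c \<in> C \<Longrightarrow> prod_le x c \<Longrightarrow> (x, c) \<in> grow\<^sup>*"
  by (rule rtrancl_grow_if_guided) (rule grow_toward_chain)

lemma chain_grown: "C \<subseteq> grown"
proof
  fix c assume c: "c \<in> C"
  then have "prod_le root_pair c"
    using chain_edges S.root_reaches T.root_reaches root_pair_edges
    unfolding prod_le_iff root_pair_def by auto
  with c show "c \<in> grown"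
    unfolding grown_def by (simp add: rtrancl_grow_chain)
qed

lemma chain_greedy_tree:
  assumes "a \<in> C" "b \<in> C"
  shows "edge_le greedy_tree a b \<or> edge_le greedy_tree b a"
proof -
  have "edge_le greedy_tree x y" if "x \<in> C" "y \<in> C" "prod_le x y" for x y
    using that chain_grown by (auto intro: edge_le_greedy_tree rtrancl_grow_chain)
  then show ?thesis
    using chain_comparable[OF assms] assms by blast
qed

end

theorem mainTheorem14:
  fixes S :: "'s ptree" and T :: "'t ptree" and C :: "('s \<times> 't) set"
  assumes "is_tree S" and "is_tree T"
    and "C \<subseteq> edges S \<times> edges T" and "C \<noteq> {}"
    and "\<forall>x \<in> C. \<forall>y \<in> C.
           (edge_le S (fst x) (fst y) \<and> edge_le T (snd x) (snd y))
         \<or> (edge_le S (fst y) (fst x) \<and> edge_le T (snd y) (snd x))"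
  shows "\<exists>(A :: nat ptree) l. is_shuffle S T A l \<and>
           (\<exists>D \<subseteq> edges A. (\<forall>a \<in> D. \<forall>b \<in> D. edge_le A a b \<or> edge_le A b a) \<and> l ` D = C)"
proof -
  interpret chain_shuffle S T C
    using assms(1,2,3,5) by unfold_locales
  interpret G: rooted_tree greedy_tree
    by unfold_locales (rule is_tree_greedy_tree)
  obtain h :: "'s \<times> 't \<Rightarrow> nat" where h: "inj_on h (edges greedy_tree)"
    using finite_imp_inj_to_nat_seg[OF G.finite_edges] by blast
  let ?A = "rename_ptree h greedy_tree" and ?l = "id \<circ> inv_into (edges greedy_tree) h"
  have "is_shuffle S T ?A ?l"
    using is_shuffle_greedy_tree h by (rule is_shuffle_rename_ptree)
  moreover have "h ` C \<subseteq> edges ?A"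
    using chain_grown by (auto simp: rename_ptree_def)
  moreover have "edge_le ?A (h a) (h b) \<or> edge_le ?A (h b) (h a)" if "a \<in> C" "b \<in> C" for a b
  proof -
    have "a \<in> edges greedy_tree" "b \<in> edges greedy_tree"
      using that chain_grown by auto
    with chain_greedy_tree[OF that] show ?thesis
      by (simp add: G.edge_le_rename_ptree[OF h])
  qed
  then have "\<forall>a \<in> h ` C. \<forall>b \<in> h ` C. edge_le ?A a b \<or> edge_le ?A b a"
    by blast
  moreover have "?l ` h ` C = C"
    using chain_grown h by (force simp: image_image)
  ultimately show ?thesis
    by blast
qed

end
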